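(* Let $\{a_k\}_{k\ge0}$ with $\operatorname{Im}a_k>0$ be arbitrary and put $b_k:=\overline{a_{k-1}}$ for $k\ge1$; let $\{\Phi_k\}_{k\in\mathbb Z}$ be the associated system. Then for every integer $n\ge0$ and all real $x\ne t$, $$\sum_{k=-n}^{n-1}\overline{\Phi_k(x)}\,\Phi_k(t)=\frac{1}{t-x}\,\sin\Bigg(\int_x^t\sum_{k=0}^{n-1}\frac{2\operatorname{Im}a_k}{(u-\operatorname{Re}a_k)^2+(\operatorname{Im}a_k)^2}\,du\Bigg).$$
   Context: For $\mathbf a=\{a_k\}_{k\ge0}$ with $\operatorname{Im}a_k>0$: $\chi_k^+:=\frac{|1+a_k^2|}{1+a_k^2}$ (take $1$ if $1+a_k^2=0$), $B_0^+(z):=1$, $B_n^+(z):=\prod_{k=0}^{n-1}\chi_k^+\frac{z-a_k}{z-\overline{a_k}}$ ($n\ge1$), $\Phi_n^+(z):=\frac{\sqrt{\operatorname{Im}a_n}}{z-\overline{a_n}}B_n^+(z)$ ($n\ge0$). For $\mathbf b=\{b_k\}_{k\ge1}$ with $\operatorname{Im}b_k<0$: $\chi_k^-:=\frac{|1+b_k^2|}{1+b_k^2}$ (take $1$ if $1+b_k^2=0$), $B_1^-(z):=1$, $B_n^-(z):=\prod_{k=1}^{n-1}\chi_k^-\frac{z-b_k}{z-\overline{b_k}}$ ($n\ge2$), $\Phi_n^-(z):=\frac{\sqrt{-\operatorname{Im}b_n}}{z-\overline{b_n}}B_n^-(z)$ ($n\ge1$). Finally $\Phi_n:=\Phi_n^+$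 for $n=0,1,2,\dots$ and $\Phi_n:=\Phi_{-n}^-$ for $n=-1,-2,\dots$. *)

theory Defs
  imports "HOL-Analysis.Analysis"
begin

definition chi :: "complex \<Rightarrow> complex" where
  "chi c = (if 1 + c^2 = 0 then 1 else complex_of_real (cmod (1 + c^2)) / (1 + c^2))"

definition Bplus :: "(nat \<Rightarrow> complex) \<Rightarrow> nat \<Rightarrow> complex \<Rightarrow> complex" where
  "Bplus a n z = (\<Prod>k<n. chi (a k) * ((z - a k) / (z - cnj (a k))))"

definition Phiplus :: "(nat \<Rightarrow> complex) \<Rightarrow> nat \<Rightarrow> complex \<Rightarrow> complex" where
  "Phiplus a n z = complex_of_real (sqrt (Im (a n))) / (z - cnj (a n)) * Bplus a n z"

definition Bminus :: "(nat \<Rightarrow> complex) \<Rightarrow> nat \<Rightarrow> complex \<Rightarrow> complex" where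
  "Bminus b n z = (\<Prod>k\<in>{1..<n}. chi (b k) * ((z - b k) / (z - cnj (b k))))"

definition Phiminus :: "(nat \<Rightarrow> complex) \<Rightarrow> nat \<Rightarrow> complex \<Rightarrow> complex" where
  "Phiminus b n z = complex_of_real (sqrt (- Im (b n))) / (z - cnj (b n)) * Bminus b n z"

definition Phi :: "(nat \<Rightarrow> complex) \<Rightarrow> (nat \<Rightarrow> complex) \<Rightarrow> int \<Rightarrow> complex \<Rightarrow> complex" where
  "Phi a b n z = (if n \<ge> 0 then Phiplus a (nat n) z else Phiminus b (nat (- n)) z)"

end

theory Submission imports Defs begin

(* On the real line every Blaschke factor has modulus one, and Phi_k (k >= 0) satisfies the
   Christoffel-Darboux step  conj (Phi_k x) Phi_k t = (W_k - W_(k+1)) / (2 i (x - t))  with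
   W_k = conj (B_k x) B_k t,  so the sum over k < n telescopes to (1 - W_n) / (2 i (x - t)).
   At a real point u the factor for a equals  -cis (2 arctan ((u - Re a) / Im a)),  hence
   W_n = cis (theta t - theta x)  for a phase theta whose derivative is the sum of Poisson kernels
   in the statement. Finally b_k = conj a_(k-1) makes Phi_(-k-1) = conj Phi_k on the real line,
   so the negative indices contribute the complex conjugate and the total is twice the real part
   of the telescoped expression. *)

definition blaschke_factor :: "complex \<Rightarrow> complex \<Rightarrow> complex" where
  "blaschke_factor a z = (z - a) / (z - cnj a)"

definition blaschke_phase :: "(nat \<Rightarrow> complex) \<Rightarrow> nat \<Rightarrow> real \<Rightarrow> real" where
  "blaschke_phase a n u = (\<Sum>k<n. 2 * arctan ((u - Re (a k)) / Im (a k)))"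

lemma cnj_chi_mult_chi: "cnj (chi c) * chi c = 1"
proof (cases "1 + c^2 = 0")
  case True then show ?thesis by (simp add: chi_def)
next
  case False
  then have "1 + (cnj c)^2 \<noteq> 0"
    by (metis complex_cnj_add complex_cnj_one complex_cnj_power complex_cnj_zero_iff)
  have "cnj (chi c) * chi c = complex_of_real ((cmod (1+c^2))^2) / ((1+c^2) * cnj (1+c^2))"
    using False by (simp add: chi_def power2_eq_square mult.commute)
  also have "\<dots> = 1" using False \<open>1 + (cnj c)^2 \<noteq> 0\<close> by (simp only: complex_norm_square) simp
  finally show ?thesis .
qed

lemma chi_cnj: "chi (cnj c) = cnj (chi c)"
proof -
  have "1 + (cnj c)^2 = cnj (1 + c^2)" by simp
  then show ?thesis unfolding chi_def by (simp add: complex_cnj_divide del: complex_cnj_add)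
qed

lemma cnj_blaschke_factor_of_real:
  "cnj (blaschke_factor a (of_real u)) = blaschke_factor (cnj a) (of_real u)"
  by (simp add: blaschke_factor_def complex_cnj_divide)

lemma blaschke_factor_of_real:
  fixes u :: real
  assumes "Im a > 0"
  shows "blaschke_factor a (of_real u) = - cis (2 * arctan ((u - Re a) / Im a))"
proof -
  define s where "s = Im a"
  define r where "r = Re a"
  define v where "v = (u - r) / s"
  define C where "C = cos (2 * arctan v)"
  define S where "S = sin (2 * arctan v)"
  have s: "s > 0" using assms s_def by simp
  have uv: "u = r + s * v" using s v_def by simp
  have pos: "1 + v^2 > 0" by (simp add: add_pos_nonneg)
  have q: "sqrt (1 + v^2) ^ 2 = 1 + v^2" by simp
  have C: "C = (1 - v^2) / (1 + v^2)"
    unfolding C_def cos_double cos_arctan sin_arctan by (simp add: power_divide q diff_divide_distrib)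
  have S: "S = 2 * v / (1 + v^2)"
    unfolding S_def sin_double cos_arctan sin_arctan using q by (simp add: power2_eq_square)
  have im_part: "v + v * C = S" unfolding C S using pos by (simp add: field_simps)
  have "v * S = 2 * v^2 / (1 + v^2)" by (simp add: S power2_eq_square)
  then have "C + v * S = ((1 - v^2) + 2 * v^2) / (1 + v^2)"
    unfolding C by (simp only: add_divide_distrib[symmetric])
  then have re_part: "C + v * S = 1" using pos by simp
  have "of_real u - a = - cis (2 * arctan v) * (of_real u - cnj a)"
    using arg_cong[OF im_part, of "\<lambda>z. s*z"] arg_cong[OF re_part, of "\<lambda>z. s*z"]
    by (simp add: complex_eq_iff uv r_def s_def C_def S_def algebra_simps)
  moreover have "of_real u - cnj a \<noteq> 0" using s by (auto simp: complex_eq_iff s_def)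
  ultimately show ?thesis
    by (simp add: blaschke_factor_def divide_eq_eq v_def r_def s_def)
qed

lemma Bplus_Suc: "Bplus a (Suc n) z = Bplus a n z * (chi (a n) * blaschke_factor (a n) z)"
  by (simp add: Bplus_def blaschke_factor_def)

lemma Bminus_reflect:
  assumes "\<And>k. k \<ge> 1 \<Longrightarrow> b k = cnj (a (k - 1))"
  shows "Bminus b (Suc n) (of_real u) = cnj (Bplus a n (of_real u))"
proof (induction n)
  case 0 then show ?case by (simp add: Bminus_def Bplus_def)
next
  case (Suc n)
  have "Bminus b (Suc (Suc n)) (of_real u)
      = Bminus b (Suc n) (of_real u) * (chi (b (Suc n)) * blaschke_factor (b (Suc n)) (of_real u))"
    by (simp add: Bminus_def blaschke_factor_def)
  then show ?case
    using Suc assms[of "Suc n"] by (simp add: Bplus_Suc chi_cnj flip: cnj_blaschke_factor_of_real)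
qed

lemma Phiminus_reflect:
  assumes "\<And>k. k \<ge> 1 \<Longrightarrow> b k = cnj (a (k - 1))"
  shows "Phiminus b (Suc n) (of_real u) = cnj (Phiplus a n (of_real u))"
  using Bminus_reflect[of b a, OF assms, of n u] assms[of "Suc n"]
  by (simp add: Phiminus_def Phiplus_def complex_cnj_divide)

lemma cnj_Bplus_mult_Bplus:
  assumes "\<And>k. Im (a k) > 0"
  shows "cnj (Bplus a n (of_real x)) * Bplus a n (of_real t)
    = cis (blaschke_phase a n t - blaschke_phase a n x)"
proof (induction n)
  case 0 then show ?case by (simp add: Bplus_def blaschke_phase_def)
next
  case (Suc n)
  have "cnj (Bplus a (Suc n) (of_real x)) * Bplus a (Suc n) (of_real t)
      = (cnj (Bplus a n (of_real x)) * Bplus a n (of_real t)) * (cnj (chi (a n)) * chi (a n))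
        * (cnj (blaschke_factor (a n) (of_real x)) * blaschke_factor (a n) (of_real t))"
    by (simp add: Bplus_Suc)
  also have "\<dots> = cis (blaschke_phase a (Suc n) t - blaschke_phase a (Suc n) x)"
    unfolding Suc cnj_chi_mult_chi blaschke_factor_of_real[OF assms]
    by (simp add: cis_cnj cis_mult blaschke_phase_def algebra_simps)
  finally show ?case .
qed

lemma blaschke_factor_kernel:
  fixes x t :: real
  assumes "Im a \<noteq> 0" "x \<noteq> t"
  shows "of_real (Im a) / ((of_real x - a) * (of_real t - cnj a))
    = (1 - cnj (blaschke_factor a (of_real x)) * blaschke_factor a (of_real t)) / (2 * \<i> * of_real (x - t))"
proof -
  have nz: "of_real x - a \<noteq> 0" "of_real t - cnj a \<noteq> 0" "of_real x - cnj a \<noteq> 0"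
    "complex_of_real (x - t) \<noteq> 0"
    using assms by (auto simp: complex_eq_iff)
  have "1 - cnj (blaschke_factor a (of_real x)) * blaschke_factor a (of_real t)
      = 1 - ((of_real x - cnj a) / (of_real x - a)) * ((of_real t - a) / (of_real t - cnj a))"
    by (simp add: blaschke_factor_def complex_cnj_divide)
  also have "\<dots> = ((of_real x - a) * (of_real t - cnj a) - (of_real x - cnj a) * (of_real t - a))
        / ((of_real x - a) * (of_real t - cnj a))"
    using nz by (simp add: divide_simps)
  also have "(of_real x - a) * (of_real t - cnj a) - (of_real x - cnj a) * (of_real t - a)
      = 2 * \<i> * of_real (Im a) * of_real (x - t)"
    by (simp add: complex_eq_iff algebra_simps)
  finally show ?thesis using nz by (simp add: field_simps)
qed

lemma cnj_Phiplus_mult_Phiplus: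
  fixes x t :: real
  assumes "Im (a n) > 0" "x \<noteq> t"
  shows "cnj (Phiplus a n (of_real x)) * Phiplus a n (of_real t)
    = (cnj (Bplus a n (of_real x)) * Bplus a n (of_real t)
       - cnj (Bplus a (Suc n) (of_real x)) * Bplus a (Suc n) (of_real t)) / (2 * \<i> * of_real (x - t))"
proof -
  have sqrt_sq: "cnj (complex_of_real (sqrt (Im (a n)))) * complex_of_real (sqrt (Im (a n)))
      = of_real (Im (a n))"
    using assms(1) by (simp flip: of_real_mult)
  have "cnj (Phiplus a n (of_real x)) * Phiplus a n (of_real t)
      = of_real (Im (a n)) / ((of_real x - a n) * (of_real t - cnj (a n)))
        * (cnj (Bplus a n (of_real x)) * Bplus a n (of_real t))"
    unfolding sqrt_sq[symmetric] by (simp add: Phiplus_def complex_cnj_divide)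
  also have "\<dots> = (cnj (Bplus a n (of_real x)) * Bplus a n (of_real t)
       - cnj (Bplus a (Suc n) (of_real x)) * Bplus a (Suc n) (of_real t)) / (2 * \<i> * of_real (x - t))"
    unfolding blaschke_factor_kernel[OF less_imp_neq[OF assms(1), symmetric] assms(2)]
    using cnj_chi_mult_chi[of "a n"] by (simp add: Bplus_Suc algebra_simps diff_divide_distrib)
  finally show ?thesis .
qed

lemma christoffel_darboux_Phiplus:
  fixes x t :: real
  assumes "\<And>k. Im (a k) > 0" "x \<noteq> t"
  shows "(\<Sum>k<n. cnj (Phiplus a k (of_real x)) * Phiplus a k (of_real t))
    = (1 - cis (blaschke_phase a n t - blaschke_phase a n x)) / (2 * \<i> * of_real (x - t))"
  unfolding cnj_Phiplus_mult_Phiplus[OF assms] sum_divide_distrib[symmetric]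
    cnj_Bplus_mult_Bplus[OF assms(1)]
    sum_lessThan_telescope'[of "\<lambda>k. cis (blaschke_phase a k t - blaschke_phase a k x)"]
  by (simp add: blaschke_phase_def)

lemma blaschke_phase_has_derivative:
  assumes "\<And>k. Im (a k) > 0"
  shows "(blaschke_phase a n has_real_derivative
      (\<Sum>k<n. 2 * Im (a k) / ((u - Re (a k))^2 + (Im (a k))^2))) (at u)"
proof (induction n)
  case 0 then show ?case by (simp add: blaschke_phase_def[abs_def])
next
  case (Suc n)
  define r where "r = Re (a n)"
  define s where "s = Im (a n)"
  have s: "s > 0" using assms s_def by simp
  have d: "((\<lambda>u. 2 * arctan ((u - r) / s))
      has_real_derivative 2 * (inverse (1 + ((u - r) / s)^2) * (1 / s))) (at u)"
    using s by (auto intro!: derivative_eq_intros DERIV_arctan[THEN DERIV_chain2])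
  have "(u - r)^2 + s^2 > 0" using s by (simp add: add_nonneg_pos)
  then have e: "2 * (inverse (1 + ((u - r) / s)^2) * (1 / s)) = 2 * s / ((u - r)^2 + s^2)"
    using s by (simp add: field_simps power2_eq_square)
  have "blaschke_phase a (Suc n) = (\<lambda>u. blaschke_phase a n u + 2 * arctan ((u - r) / s))"
    by (simp add: blaschke_phase_def[abs_def] r_def s_def)
  then show ?case using DERIV_add[OF Suc d] unfolding e by (simp add: r_def s_def)
qed

lemma interval_integral_poisson_kernels:
  assumes "\<And>k. Im (a k) > 0"
  shows "(LBINT u=x..t. (\<Sum>k<n. 2 * Im (a k) / ((u - Re (a k))^2 + (Im (a k))^2)))
    = blaschke_phase a n t - blaschke_phase a n x"
proof (rule interval_integral_FTC_finite)
  have "\<And>u k. (u - Re (a k))^2 + (Im (a k))^2 \<noteq> 0" "\<And>k. Im (a k) \<noteq> 0"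
    using assms by (metis add_nonneg_pos less_irrefl zero_less_power2 zero_le_power2)+
  then show "continuous_on {min x t..max x t}
      (\<lambda>u. \<Sum>k<n. 2 * Im (a k) / ((u - Re (a k))^2 + (Im (a k))^2))"
    by (intro continuous_intros) auto
next
  fix u
  show "(blaschke_phase a n has_vector_derivative
      (\<Sum>k<n. 2 * Im (a k) / ((u - Re (a k))^2 + (Im (a k))^2))) (at u within {min x t..max x t})"
    using blaschke_phase_has_derivative[OF assms, where n=n and u=u]
    by (simp add: has_real_derivative_iff_has_vector_derivative[symmetric] has_field_derivative_at_within)
qed

lemma one_minus_cis_kernel_add_cnj:
  fixes x t \<theta> :: real
  assumes "x \<noteq> t"
  shows "(1 - cis \<theta>) / (2 * \<i> * of_real (x - t)) + cnj ((1 - cis \<theta>) / (2 * \<i> * of_real (x - t)))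
     = of_real (1 / (t - x) * sin \<theta>)"
proof -
  have "cnj ((1 - cis \<theta>) / (2 * \<i> * of_real (x - t)))
      = - ((1 - cis (-\<theta>)) / (2 * \<i> * of_real (x - t)))"
    by (simp add: complex_cnj_divide cis_cnj)
  then have "(1 - cis \<theta>) / (2 * \<i> * of_real (x - t)) + cnj ((1 - cis \<theta>) / (2 * \<i> * of_real (x - t)))
      = (cis (-\<theta>) - cis \<theta>) / (2 * \<i> * of_real (x - t))"
    by (simp add: diff_divide_distrib)
  also have "cis (-\<theta>) - cis \<theta> = - 2 * \<i> * of_real (sin \<theta>)"
    by (simp add: complex_eq_iff)
  also have "- 2 * \<i> * of_real (sin \<theta>) / (2 * \<i> * of_real (x - t)) = of_real (1 / (t - x) * sin \<theta>)"
    using assms by (simp add: field_simps)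
  finally show ?thesis .
qed

lemma sum_int_interval_split_sign:
  "(\<Sum>k\<in>{- int n .. int n - 1}. f k) = (\<Sum>k<n. f (int k) + f (- int k - 1))"
proof (induction n)
  case 0 then show ?case by simp
next
  case (Suc n)
  have "{- int (Suc n) .. int (Suc n) - 1} = insert (- int n - 1) (insert (int n) {- int n .. int n - 1})"
    by auto
  then show ?case using Suc by (simp add: sum.distrib algebra_simps)
qed

theorem mainTheorem5:
  fixes a b :: "nat \<Rightarrow> complex" and n :: nat and x t :: real
  assumes ha: "\<And>k. Im (a k) > 0"
    and hb: "\<And>k. k \<ge> 1 \<Longrightarrow> b k = cnj (a (k - 1))"
    and hxt: "x \<noteq> t"
  shows "(\<Sum>k\<in>{- int n .. int n - 1}. cnj (Phi a b k (complex_of_real x)) * Phi a b k (complex_of_real t))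
    = complex_of_real (1 / (t - x) * sin (LBINT u=x..t.
        (\<Sum>k<n. 2 * Im (a k) / ((u - Re (a k))^2 + (Im (a k))^2))))"
proof -
  define T where "T k = cnj (Phiplus a k (of_real x)) * Phiplus a k (of_real t)" for k
  have "Phi a b (int k) z = Phiplus a k z" "Phi a b (- int k - 1) z = Phiminus b (Suc k) z" for k z
    by (simp_all add: Phi_def nat_add_distrib)
  then have "(\<Sum>k\<in>{- int n .. int n - 1}. cnj (Phi a b k (of_real x)) * Phi a b k (of_real t))
      = (\<Sum>k<n. T k) + cnj (\<Sum>k<n. T k)"
    unfolding sum_int_interval_split_sign
    by (simp add: T_def Phiminus_reflect[of b a, OF hb] mult.commute sum.distrib)
  also have "\<dots> = of_real (1 / (t - x) * sin (blaschke_phase a n t - blaschke_phase a n x))"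
    unfolding T_def christoffel_darboux_Phiplus[OF ha hxt] by (rule one_minus_cis_kernel_add_cnj[OF hxt])
  finally show ?thesis unfolding interval_integral_poisson_kernels[OF ha] .
qed

end
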